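(* Let $A$ be a selfadjoint operator on a separable infinite-dimensional Hilbert space $\mathcal{H}$, and let $\mathcal{L}=(\mathcal{L}_n)$ be either an $A$-regular Galerkin sequence or, if $A\ge0$, an $A^{1/2}$-regular Galerkin sequence. Let $\lambda\in\mathbb{R}$, let $\mathcal{V}\subset\operatorname{D}(A)$ be a subspace of dimension $d>0$ with orthogonal projection $\pi_{\mathcal{V}}$, and let $\varepsilon>0$ be such that $\|\pi_{\mathcal{V}}(A-\lambda)x\|\le\varepsilon\|x\|$ for all $x\in\mathcal{V}$. Then there exist $N>0$ and subspaces $\mathcal{W}_n\subset\mathcal{L}_n$ of dimension $d$ such that, for all $n\ge N$, \[ \|\pi_{\mathcal{W}_n}(A-\lambda)y\|\le2\varepsilon\sqrt{d}\,\|y\|\qquad\forall y\in\mathcal{W}_n, \] where $\pi_{\mathcal{W}_n}$ is the orthogonal projection onto $\mathcal{W}_n$.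
   Context: A sequence $\mathcal{L}=(\mathcal{L}_n)$ of finite-dimensional subspaces $\mathcal{L}_n\subset\operatorname{D}(A)$ is $A$-regular if for every $f\in\operatorname{D}(A)$ there exist $f_n\in\mathcal{L}_n$ with $\|f_n-f\|+\|Af_n-Af\|\to0$. If $A\ge0$, finite-dimensional $\mathcal{L}_n\subset\operatorname{D}(A^{1/2})$ form an $A^{1/2}$-regular sequence if every $f\in\operatorname{D}(A^{1/2})$ is the limit of some $f_n\in\mathcal{L}_n$ in the norm $\|\cdot\|+\|A^{1/2}\cdot\|$; in that case, for a finite-dimensional subspace $\mathcal{W}\subset\operatorname{D}(A^{1/2})$ and $y\in\mathcal{W}$, $\pi_{\mathcal{W}}(A-\lambda)y$ is understood in the form sense, i.e. as the element $z\in\mathcal{W}$ with $\langle w,z\rangle=\langle A^{1/2}w,A^{1/2}y\rangle-\lambda\langle w,y\rangle$ for all $w\in\mathcal{W}$. *)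

theory Defs
  imports "HOL-Analysis.Analysis"
begin

text \<open>A complex Hilbert space is modelled on a Banach type 'a (norm/topology from the
type class) together with an explicit complex scalar multiplication sc and an
inner product ip, linear in the second and conjugate-linear in the first argument,
whose induced norm is the norm of the type.\<close>

definition complex_hilbert ::
  "(complex \<Rightarrow> 'a::banach \<Rightarrow> 'a) \<Rightarrow> ('a \<Rightarrow> 'a \<Rightarrow> complex) \<Rightarrow> bool" where
  "complex_hilbert sc ip \<longleftrightarrow>
     Vector_Spaces.vector_space sc \<and>
     (\<forall>r x. sc (complex_of_real r) x = r *\<^sub>R x) \<and>
     (\<forall>x y z. ip x (y + z) = ip x y + ip x z) \<and>
     (\<forall>c x y. ip x (sc c y) = c * ip x y) \<and>
     (\<forall>x y. ip y x = cnj (ip x y)) \<and>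
     (\<forall>x. norm x = sqrt (Re (ip x x)))"

definition separable_space :: "'a::topological_space itself \<Rightarrow> bool" where
  "separable_space _ \<longleftrightarrow> (\<exists>C::'a set. countable C \<and> closure C = UNIV)"

definition infinite_dimensional :: "(complex \<Rightarrow> 'a::ab_group_add \<Rightarrow> 'a) \<Rightarrow> bool" where
  "infinite_dimensional sc \<longleftrightarrow> \<not> (\<exists>B. finite B \<and> module.span sc B = UNIV)"

definition fd_subspace :: "(complex \<Rightarrow> 'a::ab_group_add \<Rightarrow> 'a) \<Rightarrow> 'a set \<Rightarrow> bool" where
  "fd_subspace sc W \<longleftrightarrow> module.subspace sc W \<and> (\<exists>B. finite B \<and> module.span sc B = W)"

text \<open>Selfadjoint (possibly unbounded) operator with domain D, acting as A on D:
densely defined, linear, symmetric, and D(A^*) is contained in D(A).\<close>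
definition selfadjoint ::
  "(complex \<Rightarrow> 'a::banach \<Rightarrow> 'a) \<Rightarrow> ('a \<Rightarrow> 'a \<Rightarrow> complex) \<Rightarrow> 'a set \<Rightarrow> ('a \<Rightarrow> 'a) \<Rightarrow> bool" where
  "selfadjoint sc ip D A \<longleftrightarrow>
     module.subspace sc D \<and> closure D = UNIV \<and>
     (\<forall>x\<in>D. \<forall>y\<in>D. A (x + y) = A x + A y) \<and>
     (\<forall>c. \<forall>x\<in>D. A (sc c x) = sc c (A x)) \<and>
     (\<forall>x\<in>D. \<forall>y\<in>D. ip (A x) y = ip x (A y)) \<and>
     (\<forall>y z. (\<forall>x\<in>D. ip (A x) y = ip x z) \<longrightarrow> y \<in> D)"

definition nonneg_op :: "('a \<Rightarrow> 'a \<Rightarrow> complex) \<Rightarrow> 'a set \<Rightarrow> ('a \<Rightarrow> 'a) \<Rightarrow> bool" where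
  "nonneg_op ip D A \<longleftrightarrow> (\<forall>x\<in>D. 0 \<le> Re (ip x (A x)))"

definition is_sqrt_op ::
  "(complex \<Rightarrow> 'a::banach \<Rightarrow> 'a) \<Rightarrow> ('a \<Rightarrow> 'a \<Rightarrow> complex) \<Rightarrow> 'a set \<Rightarrow> ('a \<Rightarrow> 'a)
     \<Rightarrow> 'a set \<Rightarrow> ('a \<Rightarrow> 'a) \<Rightarrow> bool" where
  "is_sqrt_op sc ip D A DS S \<longleftrightarrow>
     selfadjoint sc ip DS S \<and> nonneg_op ip DS S \<and>
     D = {x \<in> DS. S x \<in> DS} \<and> (\<forall>x\<in>D. S (S x) = A x)"

definition regular_seq ::
  "(complex \<Rightarrow> 'a::banach \<Rightarrow> 'a) \<Rightarrow> 'a set \<Rightarrow> ('a \<Rightarrow> 'a) \<Rightarrow> (nat \<Rightarrow> 'a set) \<Rightarrow> bool" where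
  "regular_seq sc D T L \<longleftrightarrow>
     (\<forall>n. fd_subspace sc (L n) \<and> L n \<subseteq> D) \<and>
     (\<forall>f\<in>D. \<exists>g. (\<forall>n. g n \<in> L n) \<and>
        (\<lambda>n. norm (g n - f) + norm (T (g n) - T f)) \<longlonglongrightarrow> 0)"

definition orth_proj :: "('a::ab_group_add \<Rightarrow> 'a \<Rightarrow> complex) \<Rightarrow> 'a set \<Rightarrow> 'a \<Rightarrow> 'a" where
  "orth_proj ip W x = (THE p. p \<in> W \<and> (\<forall>u\<in>W. ip u (x - p) = 0))"

text \<open>pi_W (A - lam) y in the form sense, with A^(1/2) given by S:
the z in W with ip w z = ip (S w) (S y) - lam * ip w y for all w in W.\<close>
definition form_proj ::
  "('a::ab_group_add \<Rightarrow> 'a \<Rightarrow> complex) \<Rightarrow> ('a \<Rightarrow> 'a) \<Rightarrow> real \<Rightarrow> 'a set \<Rightarrow> 'a \<Rightarrow> 'a" where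
  "form_proj ip S lam W y =
     (THE z. z \<in> W \<and> (\<forall>w\<in>W. ip w z = ip (S w) (S y) - complex_of_real lam * ip w y))"

end

theory Submission
  imports Defs
begin

text \<open>Orthonormalise \<open>V\<close> to \<open>e\<^sub>1, \<dots>, e\<^sub>d\<close>. Regularity gives \<open>f\<^sub>n\<^sub>,\<^sub>j \<in> L\<^sub>n\<close> converging to \<open>e\<^sub>j\<close>
in the graph norm, so the entries \<open>\<Phi>(f\<^sub>n\<^sub>,\<^sub>i, f\<^sub>n\<^sub>,\<^sub>j)\<close> of the form \<open>\<Phi>(w, y) = \<langle>w, (A - \<lambda>) y\<rangle>\<close>
(respectively \<open>\<langle>A\<^sup>1\<^sup>/\<^sup>2 w, A\<^sup>1\<^sup>/\<^sup>2 y\<rangle> - \<lambda>\<langle>w, y\<rangle>\<close>) converge to \<open>\<Phi>(e\<^sub>i, e\<^sub>j)\<close>.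
Once \<open>\<Sum>\<^sub>i \<parallel>f\<^sub>n\<^sub>,\<^sub>i - e\<^sub>i\<parallel> \<le> 1/4\<close>, a combination of the \<open>f\<^sub>n\<^sub>,\<^sub>i\<close> and the same combination of the
\<open>e\<^sub>i\<close> have norms within a factor \<open>4/3\<close>, so \<open>W\<^sub>n = span f\<^sub>n\<close> has dimension \<open>d\<close>, and the bound
\<open>|\<Phi>(u, x)| \<le> \<epsilon> \<parallel>u\<parallel> \<parallel>x\<parallel>\<close> on \<open>V\<close> transfers to \<open>W\<^sub>n\<close> up to a factor \<open>2\<close>. For the representer
\<open>z \<in> W\<^sub>n\<close> of \<open>\<Phi>(\<cdot>, y)\<close>, that is \<open>\<pi>\<^sub>W\<^sub>n(A - \<lambda>) y\<close>, this gives
\<open>\<parallel>z\<parallel>\<^sup>2 = Re \<Phi>(z, y) \<le> 2\<epsilon> \<parallel>z\<parallel> \<parallel>y\<parallel>\<close>.\<close>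

lemma graph_norm_tendsto:
  fixes g :: "nat \<Rightarrow> 'a::real_normed_vector" and T :: "'a \<Rightarrow> 'b::real_normed_vector"
  assumes "(\<lambda>n. norm (g n - f) + norm (T (g n) - T f)) \<longlonglongrightarrow> 0"
  shows "g \<longlonglongrightarrow> f" and "(\<lambda>n. T (g n)) \<longlonglongrightarrow> T f"
proof -
  have "(\<lambda>n. g n - f) \<longlonglongrightarrow> 0"
    by (rule Lim_null_comparison[OF _ assms]) (simp add: add_increasing2)
  then show "g \<longlonglongrightarrow> f" by (simp add: LIM_zero_iff)
  have "(\<lambda>n. T (g n) - T f) \<longlonglongrightarrow> 0"
    by (rule Lim_null_comparison[OF _ assms]) (simp add: add_increasing)
  then show "(\<lambda>n. T (g n)) \<longlonglongrightarrow> T f" by (simp add: LIM_zero_iff)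
qed

lemma regular_seq_approximants:
  assumes reg: "regular_seq sc X T L" and eX: "\<forall>j<d. e j \<in> X"
  shows "\<exists>f. (\<forall>n. \<forall>j<d. f n j \<in> L n) \<and> (\<forall>j<d. (\<lambda>n. f n j) \<longlonglongrightarrow> e j) \<and>
             (\<forall>j<d. (\<lambda>n. T (f n j)) \<longlonglongrightarrow> T (e j))"
proof -
  have "\<forall>j\<in>{..<d}. \<exists>g. (\<forall>n. g n \<in> L n) \<and> (\<lambda>n. norm (g n - e j) + norm (T (g n) - T (e j))) \<longlonglongrightarrow> 0"
    using reg eX unfolding regular_seq_def by blast
  then obtain G where G: "\<forall>j\<in>{..<d}. (\<forall>n. G j n \<in> L n) \<and>
      (\<lambda>n. norm (G j n - e j) + norm (T (G j n) - T (e j))) \<longlonglongrightarrow> 0"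
    by (metis bchoice)
  then show ?thesis
    by (intro exI[of _ "\<lambda>n j. G j n"] conjI allI impI) (use graph_norm_tendsto in blast)+
qed

locale complex_inner_space =
  fixes sc :: "complex \<Rightarrow> 'a::banach \<Rightarrow> 'a" and ip :: "'a \<Rightarrow> 'a \<Rightarrow> complex"
  assumes complex_hilbert: "complex_hilbert sc ip"

sublocale complex_inner_space \<subseteq> vector_space sc
  using complex_hilbert by (simp add: complex_hilbert_def)

context complex_inner_space
begin

lemma scaleR_eq_sc: "r *\<^sub>R x = sc (complex_of_real r) x"
  using complex_hilbert unfolding complex_hilbert_def by simp

lemma ip_add_right: "ip x (y + z) = ip x y + ip x z"
  using complex_hilbert unfolding complex_hilbert_def by blast

lemma ip_scale_right: "ip x (sc c y) = c * ip x y"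
  using complex_hilbert unfolding complex_hilbert_def by blast

lemma ip_cnj: "ip y x = cnj (ip x y)"
  using complex_hilbert unfolding complex_hilbert_def by blast

lemma norm_eq_sqrt_ip: "norm x = sqrt (Re (ip x x))"
  using complex_hilbert unfolding complex_hilbert_def by blast

lemma ip_add_left: "ip (x + y) z = ip x z + ip y z"
  by (metis ip_cnj ip_add_right complex_cnj_add)

lemma ip_scale_left: "ip (sc c x) y = cnj c * ip x y"
  by (metis ip_cnj ip_scale_right complex_cnj_mult)

lemma ip_zero_right [simp]: "ip x 0 = 0"
  using ip_add_right[of x 0 0] by simp

lemma ip_zero_left [simp]: "ip 0 x = 0"
  using ip_add_left[of 0 0 x] by simp

lemma ip_diff_right: "ip x (y - z) = ip x y - ip x z"
  by (metis ip_add_right diff_add_cancel add_diff_cancel_right')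

lemma ip_diff_left: "ip (x - y) z = ip x z - ip y z"
  by (metis ip_add_left diff_add_cancel add_diff_cancel_right')

lemma ip_scaleR_right [simp]: "ip x (r *\<^sub>R y) = complex_of_real r * ip x y"
  by (simp add: scaleR_eq_sc ip_scale_right)

lemma ip_sum_right: "ip x (sum g I) = (\<Sum>i\<in>I. ip x (g i))"
  by (induction I rule: infinite_finite_induct) (auto simp: ip_add_right)

lemma ip_sum_left: "ip (sum g I) x = (\<Sum>i\<in>I. ip (g i) x)"
  by (induction I rule: infinite_finite_induct) (auto simp: ip_add_left)

lemma ip_self: "ip x x = complex_of_real ((norm x)\<^sup>2)"
proof -
  have "Im (ip x x) = 0"
    using arg_cong[OF ip_cnj[of x x], of Im] by simp
  moreover have "Re (ip x x) \<ge> 0"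
    using norm_eq_sqrt_ip[of x] norm_ge_zero[of x] by (metis real_sqrt_lt_0_iff not_le)
  ultimately show ?thesis
    using norm_eq_sqrt_ip[of x] by (simp add: complex_eq_iff)
qed

lemma ip_self_eq_0_iff: "ip x x = 0 \<longleftrightarrow> x = 0"
  by (simp add: ip_self)

lemma mult_cnj_self: "c * cnj c = complex_of_real ((cmod c)\<^sup>2)"
  using complex_norm_square[of c] by simp

lemma cnj_mult_self: "cnj c * c = complex_of_real ((cmod c)\<^sup>2)"
  using mult_cnj_self[of c] by (simp only: mult.commute)

lemma norm_sc: "norm (sc c x) = cmod c * norm x"
proof -
  have "complex_of_real ((norm (sc c x))\<^sup>2) = ip (sc c x) (sc c x)" by (rule ip_self[symmetric])
  also have "\<dots> = (cnj c * c) * ip x x" by (simp add: ip_scale_left ip_scale_right mult.assoc)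
  also have "\<dots> = complex_of_real ((cmod c * norm x)\<^sup>2)"
    by (simp only: cnj_mult_self ip_self of_real_mult[symmetric] power_mult_distrib)
  finally have "(norm (sc c x))\<^sup>2 = (cmod c * norm x)\<^sup>2" by (simp only: of_real_eq_iff)
  then show ?thesis by (simp add: power2_eq_iff_nonneg)
qed

lemma cauchy_schwarz: "cmod (ip x y) \<le> norm x * norm y"
proof (cases "x = 0")
  case True then show ?thesis by simp
next
  case False
  define a where "a = ip x y"
  define n where "n = (norm x)\<^sup>2"
  have n: "n > 0" using False by (simp add: n_def)
  define t where "t = a / complex_of_real n"
  have cy: "ip y x = cnj a" unfolding a_def by (rule ip_cnj)
  have cx: "ip x x = complex_of_real n" unfolding n_def by (rule ip_self)
  have "complex_of_real ((norm (y - sc t x))\<^sup>2) = ip (y - sc t x) (y - sc t x)" by (rule ip_self[symmetric])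
  also have "\<dots> = ip y y - t * ip y x - cnj t * ip x y + (cnj t * t) * ip x x"
    by (simp add: ip_diff_left ip_diff_right ip_scale_left ip_scale_right algebra_simps)
  also have "\<dots> = ip y y - t * cnj a - cnj t * a + (cnj t * t) * complex_of_real n"
    by (simp only: cy cx a_def)
  also have "\<dots> = complex_of_real ((norm y)\<^sup>2 - (cmod a)\<^sup>2 / n)"
  proof -
    have "t * cnj a = (a * cnj a) / complex_of_real n" by (simp add: t_def)
    also have "\<dots> = complex_of_real ((cmod a)\<^sup>2) / complex_of_real n" by (simp only: mult_cnj_self)
    finally have 1: "t * cnj a = complex_of_real ((cmod a)\<^sup>2 / n)" by simp
    have "cnj t * a = (cnj a * a) / complex_of_real n" by (simp add: t_def)
    also have "\<dots> = complex_of_real ((cmod a)\<^sup>2) / complex_of_real n" by (simp only: cnj_mult_self)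
    finally have 2: "cnj t * a = complex_of_real ((cmod a)\<^sup>2 / n)" by simp
    have "(cnj t * t) * complex_of_real n = complex_of_real ((cmod t)\<^sup>2 * n)" by (simp only: cnj_mult_self of_real_mult)
    also have "(cmod t)\<^sup>2 * n = (cmod a)\<^sup>2 / n" using n by (simp add: t_def norm_divide power_divide power2_eq_square)
    finally have 3: "(cnj t * t) * complex_of_real n = complex_of_real ((cmod a)\<^sup>2 / n)" .
    show ?thesis unfolding 1 2 3 ip_self by (simp only: diff_add_cancel of_real_diff)
  qed
  finally have "(norm (y - sc t x))\<^sup>2 = (norm y)\<^sup>2 - (cmod a)\<^sup>2 / n" by (simp only: of_real_eq_iff)
  then have "0 \<le> (norm y)\<^sup>2 - (cmod a)\<^sup>2 / n" using zero_le_power2[of "norm (y - sc t x)"] by linarith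
  then have "(cmod a)\<^sup>2 \<le> (norm x * norm y)\<^sup>2" using n by (simp add: field_simps n_def power_mult_distrib)
  then show ?thesis unfolding a_def by (meson norm_ge_zero mult_nonneg_nonneg power2_le_imp_le)
qed

lemma ip_bounded_bilinear: "bounded_bilinear ip"
proof
  fix a a' b b' :: 'a and r :: real
  show "ip (a + a') b = ip a b + ip a' b" by (rule ip_add_left)
  show "ip a (b + b') = ip a b + ip a b'" by (rule ip_add_right)
  show "ip (r *\<^sub>R a) b = r *\<^sub>R ip a b" by (simp add: scaleR_eq_sc ip_scale_left scaleR_conv_of_real)
  show "ip a (r *\<^sub>R b) = r *\<^sub>R ip a b" by (simp add: scaleR_eq_sc ip_scale_right scaleR_conv_of_real)
  show "\<exists>K. \<forall>x y. norm (ip x y) \<le> norm x * norm y * K"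
    by (rule exI[of _ 1]) (simp add: cauchy_schwarz)
qed

lemmas tendsto_ip = bounded_bilinear.tendsto[OF ip_bounded_bilinear]

lemma ip_eq_0_if_orthogonal_span:
  assumes "\<And>v. v \<in> S \<Longrightarrow> ip v r = 0" and "w \<in> span S"
  shows "ip w r = 0"
proof -
  have "subspace {w. ip w r = 0}"
    by (auto simp: subspace_def ip_add_left ip_scale_left)
  then show ?thesis
    using span_induct[OF assms(2)] assms(1) by auto
qed

lemma sum_scale_semilinear:
  fixes \<phi> :: "'a \<Rightarrow> complex"
  assumes W: "subspace W"
    and add: "\<And>x y. x \<in> W \<Longrightarrow> y \<in> W \<Longrightarrow> \<phi> (x + y) = \<phi> x + \<phi> y"
    and hom: "\<And>c x. x \<in> W \<Longrightarrow> \<phi> (sc c x) = \<kappa> c * \<phi> x"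
    and "finite I" and "\<forall>i\<in>I. v i \<in> W"
  shows "\<phi> (\<Sum>i\<in>I. sc (c i) (v i)) = (\<Sum>i\<in>I. \<kappa> (c i) * \<phi> (v i))"
  using \<open>finite I\<close> \<open>\<forall>i\<in>I. v i \<in> W\<close>
proof (induction I rule: finite_induct)
  case empty
  have "\<phi> 0 + \<phi> 0 = \<phi> 0 + 0" using add[OF subspace_0[OF W] subspace_0[OF W]] by simp
  then show ?case by simp
next
  case (insert i I)
  have "(\<Sum>i\<in>I. sc (c i) (v i)) \<in> W"
    using insert.prems by (intro subspace_sum[OF W] subspace_scale[OF W]) auto
  then show ?case
    using insert add hom subspace_scale[OF W] by simp
qed

lemma sum_scale_in_span_image:
  assumes "finite I" and "y \<in> span (g ` I)"
  shows "\<exists>c. y = (\<Sum>i\<in>I. sc (c i) (g i))"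
proof -
  have "subspace {y. \<exists>c. y = (\<Sum>i\<in>I. sc (c i) (g i))}"
    unfolding subspace_def
  proof safe
    show "\<exists>c. 0 = (\<Sum>i\<in>I. sc (c i) (g i))"
      by (rule exI[of _ "\<lambda>_. 0"]) simp
    fix a c1 c2
    show "\<exists>c. (\<Sum>i\<in>I. sc (c1 i) (g i)) + (\<Sum>i\<in>I. sc (c2 i) (g i)) = (\<Sum>i\<in>I. sc (c i) (g i))"
      by (rule exI[of _ "\<lambda>i. c1 i + c2 i"]) (simp add: scale_left_distrib sum.distrib)
    show "\<exists>c. sc a (\<Sum>i\<in>I. sc (c1 i) (g i)) = (\<Sum>i\<in>I. sc (c i) (g i))"
      by (rule exI[of _ "\<lambda>i. a * c1 i"]) (simp add: scale_sum_right)
  qed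
  moreover have "g j \<in> {y. \<exists>c. y = (\<Sum>i\<in>I. sc (c i) (g i))}" if "j \<in> I" for j
  proof (intro CollectI exI[of _ "\<lambda>i. if i = j then 1 else 0"])
    show "g j = (\<Sum>i\<in>I. sc (if i = j then 1 else 0) (g i))"
      using that \<open>finite I\<close> by (simp add: if_distrib[of "\<lambda>c. sc c _"] sum.delta' cong: if_cong)
  qed
  then have "g ` I \<subseteq> {y. \<exists>c. y = (\<Sum>i\<in>I. sc (c i) (g i))}"
    by blast
  ultimately show ?thesis
    using span_minimal assms(2) by blast
qed

subsection \<open>Orthonormal families\<close>

definition orthonormal :: "nat \<Rightarrow> (nat \<Rightarrow> 'a) \<Rightarrow> bool" where
  "orthonormal d e \<longleftrightarrow> (\<forall>i<d. \<forall>j<d. ip (e i) (e j) = (if i = j then 1 else 0))"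

definition independent_family :: "nat \<Rightarrow> (nat \<Rightarrow> 'a) \<Rightarrow> bool" where
  "independent_family d g \<longleftrightarrow> (\<forall>b. (\<Sum>k<d. sc (b k) (g k)) = 0 \<longrightarrow> (\<forall>i<d. b i = 0))"

lemma dim_span_independent_family:
  assumes "independent_family d g"
  shows "dim (span (g ` {..<d})) = d"
proof -
  have zero: "b i = 0" if "(\<Sum>k<d. sc (b k) (g k)) = 0" "i < d" for b i
    using assms that unfolding independent_family_def by blast
  have inj: "inj_on g {..<d}"
  proof (rule inj_onI, rule ccontr)
    fix i j assume i: "i \<in> {..<d}" and j: "j \<in> {..<d}" and eq: "g i = g j" and "i \<noteq> j"
    define b where "b k = (if k = i then 1 else 0) - (if k = j then 1 else (0::complex))" for k
    have "(\<Sum>k<d. sc (b k) (g k)) = (\<Sum>k<d. if k = i then g k else 0) - (\<Sum>k<d. if k = j then g k else 0)"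
      unfolding b_def scale_left_diff_distrib sum_subtractf
      by (intro arg_cong2[where f = "(-)"] sum.cong) auto
    also have "\<dots> = 0" using i j eq by (simp add: sum.delta)
    finally show False
      using zero[of b i] i \<open>i \<noteq> j\<close> by (simp add: b_def)
  qed
  have "independent (g ` {..<d})"
  proof (rule independent_if_scalars_zero)
    fix F x assume s: "(\<Sum>x\<in>g ` {..<d}. sc (F x) x) = 0" and "x \<in> g ` {..<d}"
    then obtain i where "i < d" "x = g i" by auto
    moreover have "(\<Sum>k<d. sc (F (g k)) (g k)) = 0"
      using s by (simp add: sum.reindex[OF inj])
    ultimately show "F x = 0" using zero[of "\<lambda>k. F (g k)"] by auto
  qed simp
  then show ?thesis
    using inj by (simp add: dim_eq_card_independent card_image)
qed

lemma orthonormal_coeff: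
  assumes "orthonormal d e" and "j < d"
  shows "ip (e j) (\<Sum>k<d. sc (b k) (e k)) = b j"
proof -
  have "ip (e j) (\<Sum>k<d. sc (b k) (e k)) = (\<Sum>k<d. if j = k then b k else 0)"
    using assms unfolding orthonormal_def by (intro trans[OF ip_sum_right sum.cong]) (auto simp: ip_scale_right)
  also have "\<dots> = b j" using \<open>j < d\<close> by (simp add: sum.delta)
  finally show ?thesis .
qed

lemma orthonormal_independent_family: "orthonormal d e \<Longrightarrow> independent_family d e"
  unfolding independent_family_def using orthonormal_coeff by (metis ip_zero_right)

lemma orthonormal_norm_coeff_le:
  assumes "orthonormal d e" and "i < d"
  shows "cmod (b i) \<le> norm (\<Sum>k<d. sc (b k) (e k))"
proof -
  have "ip (e i) (e i) = 1"
    using assms unfolding orthonormal_def by simp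
  then have "(norm (e i))\<^sup>2 = 1"
    by (simp only: ip_self of_real_eq_1_iff)
  then have "norm (e i) = 1"
    using norm_ge_zero[of "e i"] by (simp add: power2_eq_1_iff)
  then show ?thesis
    using cauchy_schwarz[of "e i" "\<Sum>k<d. sc (b k) (e k)"] orthonormal_coeff[OF assms] by simp
qed

lemma orthonormal_expansion:
  assumes e: "orthonormal m e" and u: "u \<in> span (e ` {..<m})"
  shows "u = (\<Sum>k<m. sc (ip (e k) u) (e k))"
proof -
  define r where "r = u - (\<Sum>k<m. sc (ip (e k) u) (e k))"
  have "ip v r = 0" if "v \<in> e ` {..<m}" for v
    using that orthonormal_coeff[OF e] by (auto simp: r_def ip_diff_right)
  moreover have "r \<in> span (e ` {..<m})"
    unfolding r_def by (intro span_diff u span_sum span_scale span_base) auto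
  ultimately have "ip r r = 0"
    by (rule ip_eq_0_if_orthogonal_span)
  then show ?thesis by (simp add: ip_self_eq_0_iff r_def)
qed

lemma gram_schmidt_step:
  assumes es: "orthonormal (length es) ((!) es)"
  shows "\<exists>es'. orthonormal (length es') ((!) es') \<and> span (set es') = span (insert v (set es))"
proof -
  define m where "m = length es"
  define e where "e = (!) es"
  have set_es: "set es = e ` {..<m}"
    by (auto simp: e_def m_def in_set_conv_nth)
  define w where "w = v - (\<Sum>k<m. sc (ip (e k) v) (e k))"
  have v_w: "v - w \<in> span (set es)"
    unfolding w_def set_es by (auto intro: span_sum span_scale span_base)
  show ?thesis
  proof (cases "w = 0")
    case True
    then show ?thesis
      using es v_w by (intro exI[of _ es]) (simp add: span_redundant)
  next
    case False
    define e' where "e' = sc (complex_of_real (1 / norm w)) w"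
    have e'_orth: "ip (e j) e' = 0" if "j < m" for j
      using orthonormal_coeff[OF es[folded m_def e_def] that, of "\<lambda>k. ip (e k) v"]
      by (simp add: e'_def w_def ip_scale_right ip_diff_right)
    have "ip e' e' = cnj (complex_of_real (1 / norm w)) * (complex_of_real (1 / norm w) * ip w w)"
      unfolding e'_def by (simp only: ip_scale_left ip_scale_right mult.left_commute)
    also have "\<dots> = 1"
      using False by (simp add: ip_self power2_eq_square)
    finally have "orthonormal (length (es @ [e'])) ((!) (es @ [e']))"
      using es e'_orth ip_cnj[of e' "e _"] unfolding orthonormal_def
      by (auto simp: nth_append e_def m_def less_Suc_eq)
    moreover have "span (insert e' (set es)) = span (insert v (set es))"
    proof -
      have "v = sc (complex_of_real (norm w)) e' + (v - w)"
        using False by (simp add: e'_def)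
      moreover have "span (set es) \<subseteq> span (insert u (set es))" for u
        by (rule span_mono) auto
      ultimately have "v \<in> span (insert e' (set es))"
        using v_w by (metis span_add span_base span_scale insertI1 subsetD)
      moreover have "w = v - (v - w)"
        by simp
      then have "e' \<in> span (insert v (set es))"
        using v_w \<open>span (set es) \<subseteq> span (insert v (set es))\<close> unfolding e'_def
        by (metis span_base span_diff span_scale insertI1 subsetD)
      ultimately show ?thesis
        unfolding span_eq by (auto intro: span_base)
    qed
    ultimately show ?thesis
      by (intro exI[of _ "es @ [e']"]) simp
  qed
qed

lemma gram_schmidt: "\<exists>es. orthonormal (length es) ((!) es) \<and> span (set es) = span (set vs)"
proof (induction vs rule: rev_induct)
  case Nil
  show ?case by (rule exI[of _ "[]"]) (simp add: orthonormal_def)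
next
  case (snoc v vs)
  then obtain es where es: "orthonormal (length es) ((!) es)" and sp: "span (set es) = span (set vs)"
    by blast
  obtain es' where "orthonormal (length es') ((!) es')" "span (set es') = span (insert v (set es))"
    using gram_schmidt_step[OF es] by blast
  moreover have "span (insert v (set es)) = span (set (vs @ [v]))"
    by (simp only: set_append set_simps Un_insert_right Un_empty_right span_insert sp)
  ultimately show ?case
    by auto
qed

lemma orthonormal_basis_exists:
  assumes V: "subspace V" and "dim V = d" and "d > 0"
  shows "\<exists>e. orthonormal d e \<and> span (e ` {..<d}) = V"
proof -
  obtain B where B: "B \<subseteq> V" "independent B" "V \<subseteq> span B" "card B = dim V"
    by (rule basis_exists)
  have "finite B"
    using B(4) assms card_ge_0_finite by auto
  then obtain vs where "set vs = B"
    using finite_list by blast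
  moreover have "span B = V"
    using B V by (intro span_subspace) auto
  ultimately obtain es where es: "orthonormal (length es) ((!) es)" and span_es: "span (set es) = V"
    using gram_schmidt[of vs] by blast
  have set_es: "set es = (!) es ` {..<length es}"
    by (auto simp: in_set_conv_nth)
  have "length es = d"
    using dim_span_independent_family[OF orthonormal_independent_family[OF es]] span_es set_es \<open>dim V = d\<close>
    by (simp del: dim_span)
  then show ?thesis
    using es span_es set_es by (intro exI[of _ "(!) es"]) simp
qed

lemma riesz_representation:
  fixes \<phi> :: "'a \<Rightarrow> complex"
  assumes "finite B"
    and add: "\<And>x y. x \<in> span B \<Longrightarrow> y \<in> span B \<Longrightarrow> \<phi> (x + y) = \<phi> x + \<phi> y"
    and hom: "\<And>c x. x \<in> span B \<Longrightarrow> \<phi> (sc c x) = cnj c * \<phi> x"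
  shows "\<exists>!z. z \<in> span B \<and> (\<forall>w\<in>span B. ip w z = \<phi> w)"
proof -
  obtain vs where "set vs = B"
    using finite_list[OF \<open>finite B\<close>] by blast
  then obtain es where es: "orthonormal (length es) ((!) es)" and sp: "span (set es) = span B"
    using gram_schmidt[of vs] by blast
  define m where "m = length es"
  define e where "e = (!) es"
  have e: "orthonormal m e" using es by (simp add: e_def m_def)
  have "set es = e ` {..<m}"
    by (auto simp: e_def m_def in_set_conv_nth)
  then have span_e: "span B = span (e ` {..<m})"
    using sp by simp
  have e_in: "\<forall>k\<in>{..<m}. e k \<in> span B"
    unfolding span_e by (auto intro: span_base)
  define z where "z = (\<Sum>k<m. sc (\<phi> (e k)) (e k))"
  have z_in: "z \<in> span B"
    unfolding z_def using e_in by (intro span_sum span_scale) auto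
  have z_rep: "ip w z = \<phi> w" if "w \<in> span B" for w
  proof -
    have w: "w = (\<Sum>k<m. sc (ip (e k) w) (e k))"
      using orthonormal_expansion[OF e] that span_e by blast
    have "ip w z = (\<Sum>k<m. cnj (ip (e k) w) * ip (e k) z)"
      by (subst w) (simp add: ip_sum_left ip_scale_left)
    also have "\<dots> = (\<Sum>k<m. cnj (ip (e k) w) * \<phi> (e k))"
      unfolding z_def using orthonormal_coeff[OF e] by simp
    also have "\<dots> = \<phi> w"
      by (subst (2) w, rule sum_scale_semilinear[OF subspace_span add hom _ e_in, symmetric]) auto
    finally show ?thesis .
  qed
  show ?thesis
  proof (rule ex1I[of _ z])
    fix y assume y: "y \<in> span B \<and> (\<forall>w\<in>span B. ip w y = \<phi> w)"
    then have "ip (y - z) (y - z) = 0"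
      using z_in z_rep span_diff by (simp add: ip_diff_right)
    then show "y = z" by (simp add: ip_self_eq_0_iff)
  qed (use z_in z_rep in blast)
qed

lemma orth_proj_span:
  assumes "finite B"
  shows "orth_proj ip (span B) x \<in> span B \<and> (\<forall>u\<in>span B. ip u (orth_proj ip (span B) x) = ip u x)"
proof -
  have "\<exists>!p. p \<in> span B \<and> (\<forall>u\<in>span B. ip u p = ip u x)"
    using assms by (intro riesz_representation) (auto simp: ip_add_left ip_scale_left)
  moreover have "(\<lambda>p. p \<in> span B \<and> (\<forall>u\<in>span B. ip u (x - p) = 0))
      = (\<lambda>p. p \<in> span B \<and> (\<forall>u\<in>span B. ip u p = ip u x))"
    by (auto simp: ip_diff_right)
  ultimately show ?thesis
    unfolding orth_proj_def by (simp only:) (erule theI')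
qed

subsection \<open>Sesquilinear forms and their representers\<close>

definition sesquilinear_on :: "'a set \<Rightarrow> ('a \<Rightarrow> 'a \<Rightarrow> complex) \<Rightarrow> bool" where
  "sesquilinear_on X \<Phi> \<longleftrightarrow>
     (\<forall>x\<in>X. \<forall>y\<in>X. \<forall>z\<in>X. \<Phi> (x + y) z = \<Phi> x z + \<Phi> y z \<and> \<Phi> z (x + y) = \<Phi> z x + \<Phi> z y) \<and>
     (\<forall>c. \<forall>x\<in>X. \<forall>y\<in>X. \<Phi> (sc c x) y = cnj c * \<Phi> x y \<and> \<Phi> x (sc c y) = c * \<Phi> x y)"

lemma sesquilinear_onD:
  assumes "sesquilinear_on X \<Phi>" and "x \<in> X" and "y \<in> X"
  shows "z \<in> X \<Longrightarrow> \<Phi> (x + y) z = \<Phi> x z + \<Phi> y z"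
    and "z \<in> X \<Longrightarrow> \<Phi> z (x + y) = \<Phi> z x + \<Phi> z y"
    and "\<Phi> (sc c x) y = cnj c * \<Phi> x y"
    and "\<Phi> x (sc c y) = c * \<Phi> x y"
  using assms unfolding sesquilinear_on_def by blast+

definition form_representer :: "'a set \<Rightarrow> ('a \<Rightarrow> 'a \<Rightarrow> complex) \<Rightarrow> 'a \<Rightarrow> 'a" where
  "form_representer W \<Phi> y = (THE z. z \<in> W \<and> (\<forall>w\<in>W. ip w z = \<Phi> w y))"

lemma form_representer_span:
  assumes "finite B" and "sesquilinear_on X \<Phi>" and "span B \<subseteq> X" and "y \<in> X"
  shows "form_representer (span B) \<Phi> y \<in> span B \<and>
         (\<forall>w\<in>span B. ip w (form_representer (span B) \<Phi> y) = \<Phi> w y)"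
proof -
  have "\<exists>!z. z \<in> span B \<and> (\<forall>w\<in>span B. ip w z = \<Phi> w y)"
    using assms by (intro riesz_representation) (auto simp: sesquilinear_on_def subset_eq)
  then show ?thesis
    unfolding form_representer_def by (rule theI')
qed

lemma sesquilinear_sum_expand:
  fixes d :: nat
  assumes X: "subspace X" and \<Phi>: "sesquilinear_on X \<Phi>" and h: "\<forall>i<d. h i \<in> X"
  shows "\<Phi> (\<Sum>i<d. sc (b i) (h i)) (\<Sum>j<d. sc (c j) (h j))
       = (\<Sum>i<d. \<Sum>j<d. cnj (b i) * c j * \<Phi> (h i) (h j))"
proof -
  have y: "(\<Sum>j<d. sc (c j) (h j)) \<in> X"
    using h by (intro subspace_sum[OF X] subspace_scale[OF X]) auto
  have "\<Phi> (\<Sum>i<d. sc (b i) (h i)) (\<Sum>j<d. sc (c j) (h j))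
      = (\<Sum>i<d. cnj (b i) * \<Phi> (h i) (\<Sum>j<d. sc (c j) (h j)))"
    using y h by (intro sum_scale_semilinear[OF X]) (auto simp: sesquilinear_onD[OF \<Phi>])
  also have "\<dots> = (\<Sum>i<d. cnj (b i) * (\<Sum>j<d. c j * \<Phi> (h i) (h j)))"
    using h by (intro sum.cong refl arg_cong2[where f = "(*)"] sum_scale_semilinear[OF X, where \<kappa> = "\<lambda>c. c"])
      (auto simp: sesquilinear_onD[OF \<Phi>])
  finally show ?thesis
    by (simp add: sum_distrib_left mult.assoc)
qed

subsection \<open>Perturbation of an orthonormal family\<close>

lemma norm_sum_perturbed_ge:
  assumes e: "orthonormal d e"
  shows "(1 - (\<Sum>i<d. norm (g i - e i))) * norm (\<Sum>i<d. sc (b i) (e i)) \<le> norm (\<Sum>i<d. sc (b i) (g i))"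
proof -
  define u where "u = (\<Sum>i<d. sc (b i) (e i))"
  define z where "z = (\<Sum>i<d. sc (b i) (g i))"
  have "norm (z - u) = norm (\<Sum>i<d. sc (b i) (g i - e i))"
    by (simp add: z_def u_def scale_right_diff_distrib sum_subtractf)
  also have "\<dots> \<le> (\<Sum>i<d. cmod (b i) * norm (g i - e i))"
    by (rule order_trans[OF norm_sum]) (simp add: norm_sc)
  also have "\<dots> \<le> (\<Sum>i<d. norm u * norm (g i - e i))"
    by (intro sum_mono mult_right_mono) (auto simp: u_def orthonormal_norm_coeff_le[OF e])
  finally have "norm (z - u) \<le> (\<Sum>i<d. norm (g i - e i)) * norm u"
    by (simp add: sum_distrib_left mult.commute)
  then show ?thesis
    using norm_triangle_sub[of u z] norm_minus_commute[of u z]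
    unfolding u_def[symmetric] z_def[symmetric] by (simp add: left_diff_distrib)
qed

lemma norm_sum_close_ge:
  assumes e: "orthonormal d e" and close: "(\<Sum>i<d. norm (g i - e i)) \<le> 1/4"
  shows "3/4 * norm (\<Sum>i<d. sc (a i) (e i)) \<le> norm (\<Sum>i<d. sc (a i) (g i))"
proof -
  have "3/4 * norm (\<Sum>i<d. sc (a i) (e i)) \<le> (1 - (\<Sum>i<d. norm (g i - e i))) * norm (\<Sum>i<d. sc (a i) (e i))"
    using close by (intro mult_right_mono) auto
  then show ?thesis
    using norm_sum_perturbed_ge[OF e, of g a] by linarith
qed

lemma independent_family_if_close:
  assumes e: "orthonormal d e" and close: "(\<Sum>i<d. norm (g i - e i)) < 1"
  shows "independent_family d g"
  unfolding independent_family_def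
proof (rule allI, rule impI)
  fix b assume "(\<Sum>k<d. sc (b k) (g k)) = 0"
  then have "(1 - (\<Sum>i<d. norm (g i - e i))) * norm (\<Sum>k<d. sc (b k) (e k)) \<le> 0"
    using norm_sum_perturbed_ge[OF e, of g b] by simp
  then have "norm (\<Sum>k<d. sc (b k) (e k)) \<le> 0"
    using close by (simp add: mult_le_0_iff)
  then show "\<forall>i<d. b i = 0"
    using orthonormal_independent_family[OF e] unfolding independent_family_def by simp
qed

lemma sesquilinear_perturbation_bound:
  assumes X: "subspace X" and \<Phi>: "sesquilinear_on X \<Phi>" and e: "orthonormal d e"
    and eX: "\<forall>i<d. e i \<in> X" and gX: "\<forall>i<d. g i \<in> X"
  shows "cmod (\<Phi> (\<Sum>i<d. sc (b i) (g i)) (\<Sum>i<d. sc (c i) (g i)) - \<Phi> (\<Sum>i<d. sc (b i) (e i)) (\<Sum>i<d. sc (c i) (e i)))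
     \<le> (\<Sum>i<d. \<Sum>j<d. cmod (\<Phi> (g i) (g j) - \<Phi> (e i) (e j)))
        * norm (\<Sum>i<d. sc (b i) (e i)) * norm (\<Sum>i<d. sc (c i) (e i))"
proof -
  define u where "u = (\<Sum>i<d. sc (b i) (e i))"
  define x where "x = (\<Sum>i<d. sc (c i) (e i))"
  have "cmod (\<Phi> (\<Sum>i<d. sc (b i) (g i)) (\<Sum>i<d. sc (c i) (g i)) - \<Phi> u x)
      = cmod (\<Sum>i<d. \<Sum>j<d. cnj (b i) * c j * (\<Phi> (g i) (g j) - \<Phi> (e i) (e j)))"
    unfolding u_def x_def sesquilinear_sum_expand[OF X \<Phi> gX] sesquilinear_sum_expand[OF X \<Phi> eX]
    by (simp add: sum_subtractf right_diff_distrib)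
  also have "\<dots> \<le> (\<Sum>i<d. \<Sum>j<d. cmod (cnj (b i) * c j * (\<Phi> (g i) (g j) - \<Phi> (e i) (e j))))"
    by (rule order.trans[OF norm_sum sum_mono[OF norm_sum]])
  also have "\<dots> \<le> (\<Sum>i<d. \<Sum>j<d. norm u * norm x * cmod (\<Phi> (g i) (g j) - \<Phi> (e i) (e j)))"
    unfolding norm_mult complex_mod_cnj
    by (intro sum_mono mult_right_mono mult_mono) (auto simp: u_def x_def orthonormal_norm_coeff_le[OF e])
  also have "\<dots> = (\<Sum>i<d. \<Sum>j<d. cmod (\<Phi> (g i) (g j) - \<Phi> (e i) (e j))) * norm u * norm x"
    by (simp only: sum_distrib_left ac_simps)
  finally show ?thesis
    unfolding u_def x_def .
qed

text \<open>The thresholds \<open>1/4\<close> and \<open>\<epsilon>/8\<close> are chosen so that \<open>(1 + 1/8) (4/3)\<^sup>2 = 2\<close>.\<close>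

lemma representer_norm_le:
  assumes X: "subspace X" and \<Phi>: "sesquilinear_on X \<Phi>" and e: "orthonormal d e"
    and eX: "\<forall>i<d. e i \<in> X" and gX: "\<forall>i<d. g i \<in> X"
    and bound: "\<forall>u\<in>span (e ` {..<d}). \<forall>x\<in>span (e ` {..<d}). cmod (\<Phi> u x) \<le> \<epsilon> * norm u * norm x"
    and close: "(\<Sum>i<d. norm (g i - e i)) \<le> 1/4"
    and form_close: "(\<Sum>i<d. \<Sum>j<d. cmod (\<Phi> (g i) (g j) - \<Phi> (e i) (e j))) \<le> \<epsilon>/8"
    and "\<epsilon> \<ge> 0" and y: "y \<in> span (g ` {..<d})" and z: "z \<in> span (g ` {..<d})"
    and z_rep: "\<forall>w\<in>span (g ` {..<d}). ip w z = \<Phi> w y"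
  shows "norm z \<le> 2 * \<epsilon> * norm y"
proof -
  obtain c where y_eq: "y = (\<Sum>i<d. sc (c i) (g i))"
    using sum_scale_in_span_image y by blast
  obtain b where z_eq: "z = (\<Sum>i<d. sc (b i) (g i))"
    using sum_scale_in_span_image z by blast
  define u where "u = (\<Sum>i<d. sc (b i) (e i))"
  define x where "x = (\<Sum>i<d. sc (c i) (e i))"
  have span_e: "u \<in> span (e ` {..<d})" "x \<in> span (e ` {..<d})"
    unfolding u_def x_def by (intro span_sum span_scale span_base; simp)+
  have err: "cmod (\<Phi> z y - \<Phi> u x) \<le> \<epsilon>/8 * norm u * norm x"
  proof -
    have "cmod (\<Phi> z y - \<Phi> u x)
        \<le> (\<Sum>i<d. \<Sum>j<d. cmod (\<Phi> (g i) (g j) - \<Phi> (e i) (e j))) * norm u * norm x"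
      unfolding z_eq y_eq u_def x_def by (rule sesquilinear_perturbation_bound[OF X \<Phi> e eX gX])
    also have "\<dots> \<le> \<epsilon>/8 * norm u * norm x"
      using form_close by (intro mult_right_mono) auto
    finally show ?thesis .
  qed
  have "(norm z)\<^sup>2 = Re (ip z z)"
    by (simp add: ip_self)
  also have "\<dots> = Re (\<Phi> z y)"
    using z z_rep by simp
  also have "\<dots> \<le> cmod (\<Phi> u x) + cmod (\<Phi> z y - \<Phi> u x)"
    using complex_Re_le_cmod[of "\<Phi> z y"] norm_triangle_sub[of "\<Phi> z y" "\<Phi> u x"] by simp
  also have "\<dots> \<le> \<epsilon> * norm u * norm x + \<epsilon>/8 * norm u * norm x"
    using bound span_e err by (intro add_mono) auto
  also have "\<dots> \<le> 9/8 * \<epsilon> * ((4/3 * norm z) * (4/3 * norm y))"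
  proof -
    have "norm u * norm x \<le> (4/3 * norm z) * (4/3 * norm y)"
      using norm_sum_close_ge[OF e close, of b] norm_sum_close_ge[OF e close, of c]
      unfolding u_def x_def y_eq z_eq
      by (intro mult_mono) auto
    then have "9/8 * \<epsilon> * (norm u * norm x) \<le> 9/8 * \<epsilon> * ((4/3 * norm z) * (4/3 * norm y))"
      using \<open>\<epsilon> \<ge> 0\<close> by (intro mult_left_mono) auto
    then show ?thesis
      by (simp add: algebra_simps)
  qed
  finally have "norm z * norm z \<le> norm z * (2 * \<epsilon> * norm y)"
    by (simp add: power2_eq_square algebra_simps)
  then show ?thesis
    using \<open>\<epsilon> \<ge> 0\<close> by (cases "norm z = 0") (auto intro: mult_left_le_imp_le)
qed

lemma eventually_form_representer_norm_le:
  assumes X: "subspace X" and \<Phi>: "sesquilinear_on X \<Phi>" and e: "orthonormal d e"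
    and eX: "\<forall>i<d. e i \<in> X" and fX: "\<forall>n. \<forall>i<d. f n i \<in> X"
    and bound: "\<forall>u\<in>span (e ` {..<d}). \<forall>x\<in>span (e ` {..<d}). cmod (\<Phi> u x) \<le> \<epsilon> * norm u * norm x"
    and f_lim: "\<forall>i<d. (\<lambda>n. f n i) \<longlonglongrightarrow> e i"
    and \<Phi>_lim: "\<forall>i<d. \<forall>j<d. (\<lambda>n. \<Phi> (f n i) (f n j)) \<longlonglongrightarrow> \<Phi> (e i) (e j)"
    and "\<epsilon> > 0"
  shows "eventually (\<lambda>n. independent_family d (f n) \<and>
           (\<forall>y\<in>span (f n ` {..<d}). norm (form_representer (span (f n ` {..<d})) \<Phi> y) \<le> 2 * \<epsilon> * norm y))
           sequentially"
proof -
  have "(\<lambda>n. \<Sum>i<d. norm (f n i - e i)) \<longlonglongrightarrow> 0"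
    using f_lim by (intro tendsto_null_sum tendsto_norm_zero LIM_zero) auto
  then have "eventually (\<lambda>n. (\<Sum>i<d. norm (f n i - e i)) < 1/4) sequentially"
    by (rule order_tendstoD) simp
  moreover have "(\<lambda>n. \<Sum>i<d. \<Sum>j<d. cmod (\<Phi> (f n i) (f n j) - \<Phi> (e i) (e j))) \<longlonglongrightarrow> 0"
    using \<Phi>_lim by (intro tendsto_null_sum tendsto_norm_zero LIM_zero) auto
  then have "eventually (\<lambda>n. (\<Sum>i<d. \<Sum>j<d. cmod (\<Phi> (f n i) (f n j) - \<Phi> (e i) (e j))) < \<epsilon>/8) sequentially"
    by (rule order_tendstoD) (simp add: \<open>\<epsilon> > 0\<close>)
  ultimately show ?thesis
  proof eventually_elim
    case (elim n)
    let ?W = "span (f n ` {..<d})"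
    show ?case
    proof (intro conjI ballI)
      show "independent_family d (f n)"
        using independent_family_if_close[OF e] elim by simp
    next
      fix y assume y: "y \<in> ?W"
      have "?W \<subseteq> X"
        using fX X by (intro span_minimal) auto
      then have "form_representer ?W \<Phi> y \<in> ?W \<and> (\<forall>w\<in>?W. ip w (form_representer ?W \<Phi> y) = \<Phi> w y)"
        using y by (intro form_representer_span[OF _ \<Phi>]) auto
      then show "norm (form_representer ?W \<Phi> y) \<le> 2 * \<epsilon> * norm y"
        using elim fX \<open>\<epsilon> > 0\<close> y by (intro representer_norm_le[OF X \<Phi> e eX _ bound]) auto
    qed
  qed
qed

subsection \<open>Galerkin approximation of forms\<close>

lemma galerkin_representer_bound:
  assumes X: "subspace X" and \<Phi>: "sesquilinear_on X \<Phi>"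
    and \<Phi>_cont: "\<And>xs ys x y. xs \<longlonglongrightarrow> x \<Longrightarrow> (\<lambda>n. T (xs n)) \<longlonglongrightarrow> T x \<Longrightarrow>
                   ys \<longlonglongrightarrow> y \<Longrightarrow> (\<lambda>n. T (ys n)) \<longlonglongrightarrow> T y \<Longrightarrow> (\<lambda>n. \<Phi> (xs n) (ys n)) \<longlonglongrightarrow> \<Phi> x y"
    and reg: "regular_seq sc X T L"
    and V: "subspace V" "V \<subseteq> X" "dim V = d" "d > 0"
    and bound: "\<forall>u\<in>V. \<forall>x\<in>V. cmod (\<Phi> u x) \<le> \<epsilon> * norm u * norm x"
    and "\<epsilon> > 0" and "2 * \<epsilon> \<le> C"
  shows "\<exists>N>0. \<exists>W. \<forall>n\<ge>N. W n \<subseteq> L n \<and> subspace (W n) \<and> dim (W n) = d \<and>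
           (\<forall>y\<in>W n. norm (form_representer (W n) \<Phi> y) \<le> C * norm y)"
proof -
  obtain e where e: "orthonormal d e" and span_e: "span (e ` {..<d}) = V"
    using orthonormal_basis_exists[OF V(1,3,4)] by blast
  have "e i \<in> V" if "i < d" for i
    using that span_base[of "e i" "e ` {..<d}"] span_e by simp
  then have eX: "\<forall>i<d. e i \<in> X"
    using V(2) by blast
  obtain f where fL: "\<forall>n. \<forall>j<d. f n j \<in> L n" and f_lim: "\<forall>j<d. (\<lambda>n. f n j) \<longlonglongrightarrow> e j"
    and Tf_lim: "\<forall>j<d. (\<lambda>n. T (f n j)) \<longlonglongrightarrow> T (e j)"
    using regular_seq_approximants[OF reg eX] by blast
  have L: "subspace (L n)" "L n \<subseteq> X" for n
    using reg unfolding regular_seq_def fd_subspace_def by blast+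
  have fX: "\<forall>n. \<forall>j<d. f n j \<in> X"
    using fL L(2) by blast
  have \<Phi>_lim: "\<forall>i<d. \<forall>j<d. (\<lambda>n. \<Phi> (f n i) (f n j)) \<longlonglongrightarrow> \<Phi> (e i) (e j)"
  proof (intro allI impI)
    fix i j assume "i < d" "j < d"
    then show "(\<lambda>n. \<Phi> (f n i) (f n j)) \<longlonglongrightarrow> \<Phi> (e i) (e j)"
      using f_lim Tf_lim by (intro \<Phi>_cont) auto
  qed
  have bound_e: "\<forall>u\<in>span (e ` {..<d}). \<forall>x\<in>span (e ` {..<d}). cmod (\<Phi> u x) \<le> \<epsilon> * norm u * norm x"
    using bound span_e by simp
  obtain N where N: "\<forall>n\<ge>N. independent_family d (f n) \<and>
      (\<forall>y\<in>span (f n ` {..<d}). norm (form_representer (span (f n ` {..<d})) \<Phi> y) \<le> 2 * \<epsilon> * norm y)"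
    using eventually_form_representer_norm_le[OF X \<Phi> e eX fX bound_e f_lim \<Phi>_lim \<open>\<epsilon> > 0\<close>]
    unfolding eventually_sequentially by blast
  have W_n: "span (f n ` {..<d}) \<subseteq> L n \<and> subspace (span (f n ` {..<d})) \<and> dim (span (f n ` {..<d})) = d \<and>
      (\<forall>y\<in>span (f n ` {..<d}). norm (form_representer (span (f n ` {..<d})) \<Phi> y) \<le> C * norm y)"
    if "n \<ge> N" for n
  proof (intro conjI ballI)
    show "span (f n ` {..<d}) \<subseteq> L n"
      using fL L(1) by (intro span_minimal) auto
    have "independent_family d (f n)"
      using N that by blast
    then show "dim (span (f n ` {..<d})) = d"
      by (rule dim_span_independent_family)
    fix y assume "y \<in> span (f n ` {..<d})"
    then have "norm (form_representer (span (f n ` {..<d})) \<Phi> y) \<le> 2 * \<epsilon> * norm y"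
      using N that by blast
    also have "\<dots> \<le> C * norm y"
      using \<open>2 * \<epsilon> \<le> C\<close> by (intro mult_right_mono) auto
    finally show "norm (form_representer (span (f n ` {..<d})) \<Phi> y) \<le> C * norm y" .
  qed simp
  show ?thesis
    by (intro exI[of _ "Suc N"] exI[of _ "\<lambda>n. span (f n ` {..<d})"] conjI[OF zero_less_Suc]
        allI impI W_n) simp
qed

lemma selfadjoint_linear:
  assumes "selfadjoint sc ip D A" and "x \<in> D" and "y \<in> D"
  shows "A (x + y) = A x + A y" and "A (sc c x) = sc c (A x)"
  using assms unfolding selfadjoint_def by blast+

lemma galerkin_orth_proj_bound:
  assumes A: "selfadjoint sc ip D A" and reg: "regular_seq sc D A L"
    and V: "subspace V" "V \<subseteq> D" "dim V = d" "d > 0"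
    and bound: "\<forall>u\<in>V. \<forall>x\<in>V. cmod (ip u (A x - lam *\<^sub>R x)) \<le> \<epsilon> * norm u * norm x"
    and "\<epsilon> > 0" and "2 * \<epsilon> \<le> C"
  shows "\<exists>N>0. \<exists>W. \<forall>n\<ge>N. W n \<subseteq> L n \<and> subspace (W n) \<and> dim (W n) = d \<and>
           (\<forall>y\<in>W n. norm (orth_proj ip (W n) (A y - lam *\<^sub>R y)) \<le> C * norm y)"
proof -
  define \<Phi> where "\<Phi> w y = ip w (A y - lam *\<^sub>R y)" for w y
  have orth_proj_eq: "orth_proj ip W (A y - lam *\<^sub>R y) = form_representer W \<Phi> y" for W y
    unfolding orth_proj_def form_representer_def \<Phi>_def
    by (intro arg_cong[where f = The] ext) (auto simp: ip_diff_right)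
  have D: "subspace D"
    using A by (simp add: selfadjoint_def)
  have \<Phi>: "sesquilinear_on D \<Phi>"
    unfolding sesquilinear_on_def \<Phi>_def
    by (simp add: selfadjoint_linear[OF A] ip_diff_right ip_add_left ip_add_right ip_scale_left
        ip_scale_right algebra_simps)
  have \<Phi>_cont: "(\<lambda>n. \<Phi> (xs n) (ys n)) \<longlonglongrightarrow> \<Phi> x y"
    if "xs \<longlonglongrightarrow> x" "(\<lambda>n. A (xs n)) \<longlonglongrightarrow> A x" "ys \<longlonglongrightarrow> y" "(\<lambda>n. A (ys n)) \<longlonglongrightarrow> A y" for xs ys x y
    unfolding \<Phi>_def using that by (auto intro!: tendsto_ip tendsto_intros)
  have \<Phi>_bound: "\<forall>u\<in>V. \<forall>x\<in>V. cmod (\<Phi> u x) \<le> \<epsilon> * norm u * norm x"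
    using bound by (simp add: \<Phi>_def)
  have "\<exists>N>0. \<exists>W. \<forall>n\<ge>N. W n \<subseteq> L n \<and> subspace (W n) \<and> dim (W n) = d \<and>
      (\<forall>y\<in>W n. norm (form_representer (W n) \<Phi> y) \<le> C * norm y)"
    by (rule galerkin_representer_bound[OF D \<Phi> \<Phi>_cont reg V \<Phi>_bound \<open>\<epsilon> > 0\<close> \<open>2 * \<epsilon> \<le> C\<close>])
  then show ?thesis
    by (simp only: orth_proj_eq)
qed

lemma galerkin_form_proj_bound:
  assumes sqrt: "is_sqrt_op sc ip D A DS S" and reg: "regular_seq sc DS S L"
    and V: "subspace V" "V \<subseteq> D" "dim V = d" "d > 0"
    and bound: "\<forall>u\<in>V. \<forall>x\<in>V. cmod (ip u (A x - lam *\<^sub>R x)) \<le> \<epsilon> * norm u * norm x"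
    and "\<epsilon> > 0" and "2 * \<epsilon> \<le> C"
  shows "\<exists>N>0. \<exists>W. \<forall>n\<ge>N. W n \<subseteq> L n \<and> subspace (W n) \<and> dim (W n) = d \<and>
           (\<forall>y\<in>W n. norm (form_proj ip S lam (W n) y) \<le> C * norm y)"
proof -
  define \<Psi> where "\<Psi> w y = ip (S w) (S y) - complex_of_real lam * ip w y" for w y
  have S: "selfadjoint sc ip DS S" and D: "D = {x \<in> DS. S x \<in> DS}" and SS: "\<forall>x\<in>D. S (S x) = A x"
    using sqrt by (auto simp: is_sqrt_op_def)
  have DS: "subspace DS"
    using S by (simp add: selfadjoint_def)
  have \<Psi>: "sesquilinear_on DS \<Psi>"
    unfolding sesquilinear_on_def \<Psi>_def
    by (simp add: selfadjoint_linear[OF S] ip_add_left ip_add_right ip_scale_left ip_scale_right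
        algebra_simps)
  have \<Psi>_cont: "(\<lambda>n. \<Psi> (xs n) (ys n)) \<longlonglongrightarrow> \<Psi> x y"
    if "xs \<longlonglongrightarrow> x" "(\<lambda>n. S (xs n)) \<longlonglongrightarrow> S x" "ys \<longlonglongrightarrow> y" "(\<lambda>n. S (ys n)) \<longlonglongrightarrow> S y" for xs ys x y
    unfolding \<Psi>_def using that by (auto intro!: tendsto_ip tendsto_intros)
  have V_DS: "V \<subseteq> DS"
    using V(2) D by blast
  have "\<Psi> u x = ip u (A x - lam *\<^sub>R x)" if "u \<in> V" "x \<in> V" for u x
  proof -
    have "ip (S u) (S x) = ip u (S (S x))"
      using S that V(2) D unfolding selfadjoint_def by blast
    moreover have "S (S x) = A x"
      using SS that V(2) by blast
    ultimately show ?thesis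
      by (simp add: \<Psi>_def ip_diff_right)
  qed
  then have \<Psi>_bound: "\<forall>u\<in>V. \<forall>x\<in>V. cmod (\<Psi> u x) \<le> \<epsilon> * norm u * norm x"
    using bound by simp
  have "\<exists>N>0. \<exists>W. \<forall>n\<ge>N. W n \<subseteq> L n \<and> subspace (W n) \<and> dim (W n) = d \<and>
      (\<forall>y\<in>W n. norm (form_representer (W n) \<Psi> y) \<le> C * norm y)"
    by (rule galerkin_representer_bound[OF DS \<Psi> \<Psi>_cont reg V(1) V_DS V(3,4) \<Psi>_bound \<open>\<epsilon> > 0\<close>
        \<open>2 * \<epsilon> \<le> C\<close>])
  then show ?thesis
    unfolding form_proj_def form_representer_def \<Psi>_def .
qed

end


theorem lemma3p6:
  fixes sc :: "complex \<Rightarrow> 'a::banach \<Rightarrow> 'a"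
    and ip :: "'a \<Rightarrow> 'a \<Rightarrow> complex"
    and D :: "'a set" and A :: "'a \<Rightarrow> 'a"
    and L :: "nat \<Rightarrow> 'a set"
    and lam :: real and V :: "'a set" and d :: nat and \<epsilon> :: real
  assumes H: "complex_hilbert sc ip"
    and sep: "separable_space TYPE('a)"
    and infdim: "infinite_dimensional sc"
    and sa: "selfadjoint sc ip D A"
    and V_sub: "module.subspace sc V" and V_D: "V \<subseteq> D"
    and V_dim: "vector_space.dim sc V = d" and d_pos: "d > 0"
    and eps_pos: "\<epsilon> > 0"
    and V_bound: "\<forall>x\<in>V. norm (orth_proj ip V (A x - lam *\<^sub>R x)) \<le> \<epsilon> * norm x"
  shows
    "(regular_seq sc D A L \<longrightarrow>
       (\<exists>N>0. \<exists>W. \<forall>n\<ge>N. W n \<subseteq> L n \<and> module.subspace sc (W n) \<and>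
            vector_space.dim sc (W n) = d \<and>
            (\<forall>y\<in>W n. norm (orth_proj ip (W n) (A y - lam *\<^sub>R y))
                        \<le> 2 * \<epsilon> * sqrt (real d) * norm y)))
     \<and>
     (\<forall>DS S. nonneg_op ip D A \<and> is_sqrt_op sc ip D A DS S \<and> regular_seq sc DS S L \<longrightarrow>
       (\<exists>N>0. \<exists>W. \<forall>n\<ge>N. W n \<subseteq> L n \<and> module.subspace sc (W n) \<and>
            vector_space.dim sc (W n) = d \<and>
            (\<forall>y\<in>W n. norm (form_proj ip S lam (W n) y)
                        \<le> 2 * \<epsilon> * sqrt (real d) * norm y)))"
proof -
  interpret complex_inner_space sc ip
    by (rule complex_inner_space.intro[OF H])
  obtain e where span_e: "span (e ` {..<d}) = V"
    using orthonormal_basis_exists[OF V_sub V_dim d_pos] by blast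
  have V_form_bound: "\<forall>u\<in>V. \<forall>x\<in>V. cmod (ip u (A x - lam *\<^sub>R x)) \<le> \<epsilon> * norm u * norm x"
  proof (intro ballI)
    fix u x assume "u \<in> V" "x \<in> V"
    then have "ip u (A x - lam *\<^sub>R x) = ip u (orth_proj ip V (A x - lam *\<^sub>R x))"
      using orth_proj_span[of "e ` {..<d}"] span_e by simp
    then have "cmod (ip u (A x - lam *\<^sub>R x)) \<le> norm u * norm (orth_proj ip V (A x - lam *\<^sub>R x))"
      using cauchy_schwarz by simp
    also have "\<dots> \<le> norm u * (\<epsilon> * norm x)"
      using V_bound \<open>x \<in> V\<close> by (intro mult_left_mono) auto
    finally show "cmod (ip u (A x - lam *\<^sub>R x)) \<le> \<epsilon> * norm u * norm x"
      by (simp add: ac_simps)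
  qed
  have C: "2 * \<epsilon> \<le> 2 * \<epsilon> * sqrt (real d)"
    using d_pos eps_pos by (simp add: mult_le_cancel_left1)
  show ?thesis
    using galerkin_orth_proj_bound[OF sa _ V_sub V_D V_dim d_pos V_form_bound eps_pos C]
      galerkin_form_proj_bound[OF _ _ V_sub V_D V_dim d_pos V_form_bound eps_pos C]
    by blast
qed

end
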